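(* Let $q(z)$ be a monic real polynomial of degree $p$ with $q(1)=0$, let $r(z)$ be a polynomial of degree $p-1$, and let $\ell>0$. Then there exist a constant $C_0>0$, depending only on $q$, $r$ and $\ell$, and some $\mu_0\in(0,\ell)$, such that for every $\mu\in(0,\mu_0)$, $$\sup_{\nu\in[\mu,\ell]}\rho\big(q(z)-\nu\, r(z)\big)\ge 1-C_0\frac{\mu}{\ell}.$$
   Context: For a polynomial $s(z)$, $\rho(s)$ denotes the maximum modulus of a (complex) root of $s$. *)

theory Defs
  imports "HOL-Computational_Algebra.Computational_Algebra"
begin

definition root_radius :: "complex poly \<Rightarrow> real" where
  "root_radius s = Max {norm z | z. poly s z = 0}"

end

theory Submission
  imports Defs
begin

text \<open>Let k be the multiplicity of 1 as a root of q. Then h = q^(k-1) has a simple root at 1,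
  so by the intermediate value theorem h - mu r^(k-1) = (q - mu r)^(k-1) has a real root x with
  |x - 1| <= C mu. By the half-plane form of the Gauss-Lucas theorem, q - mu r has a root z with
  Re z >= x, hence rho(q - mu r) >= 1 - C mu. The supremum over nu in [mu, l] dominates the value
  at nu = mu; it is finite because Cauchy's bound bounds the roots of the monic polynomials
  q - nu r uniformly in nu.\<close>

lemma poly_map_poly_of_real:
  "poly (map_poly of_real p) (of_real x) = (of_real (poly p x) :: 'a::real_field)"
  by (induction p) (auto simp: map_poly_pCons)

lemma pderiv_map_poly_of_real:
  "pderiv (map_poly of_real p) = (map_poly of_real (pderiv p) :: 'a::real_field poly)"
  by (rule poly_eqI) (simp add: coeff_map_poly coeff_pderiv)

lemma higher_pderiv_map_poly_of_real:
  "(pderiv ^^ n) (map_poly of_real p) = (map_poly of_real ((pderiv ^^ n) p) :: 'a::real_field poly)"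
  by (induction n) (simp_all add: pderiv_map_poly_of_real)

lemma higher_pderiv_diff:
  fixes p q :: "'a::idom poly"
  shows "(pderiv ^^ n) (p - q) = (pderiv ^^ n) p - (pderiv ^^ n) q"
  by (induction n arbitrary: p q) (simp_all del: funpow.simps add: funpow_Suc_right pderiv_diff)

lemma order_higher_pderiv:
  fixes p :: "'a::{idom,semiring_char_0} poly"
  assumes "p \<noteq> 0" "j < order a p"
  shows "(pderiv ^^ j) p \<noteq> 0 \<and> order a ((pderiv ^^ j) p) = order a p - j"
  using assms(2)
proof (induction j)
  case (Suc j)
  define Q where "Q = (pderiv ^^ j) p"
  have Q: "Q \<noteq> 0" "order a Q = order a p - j" using Suc by (simp_all add: Q_def)
  with Suc.prems have "order a Q \<ge> 2" by linarith
  with Q have "poly Q a = 0" "degree Q \<ge> 2"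
    using order_root order_degree[of Q a] by fastforce+
  then have "pderiv Q \<noteq> 0" "order a Q = Suc (order a (pderiv Q))"
    using order_pderiv[OF \<open>Q \<noteq> 0\<close>] by (auto simp: pderiv_eq_0_iff)
  with Q show ?case by (simp add: Q_def)
qed (simp add: assms(1))

lemma poly_pderiv_prod_linear_div:
  fixes A :: "'a::field multiset"
  assumes "z \<notin># A"
  shows "poly (pderiv (\<Prod>x\<in>#A. [:-x, 1:])) z / poly (\<Prod>x\<in>#A. [:-x, 1:]) z = (\<Sum>x\<in>#A. 1 / (z - x))"
  using assms
proof (induction A)
  case (add w A)
  define P where "P = (\<Prod>x\<in>#A. [:-x, 1:])"
  have "poly P z \<noteq> 0" "z \<noteq> w" using add.prems by (auto simp: P_def poly_prod_mset)
  moreover have "poly (pderiv ([:-w, 1:] * P)) z = poly P z + (z - w) * poly (pderiv P) z"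
    unfolding pderiv_mult by (simp add: pderiv_pCons algebra_simps)
  moreover have "poly ([:-w, 1:] * P) z = (z - w) * poly P z" by (simp add: algebra_simps)
  ultimately have "poly (pderiv ([:-w, 1:] * P)) z / poly ([:-w, 1:] * P) z
      = 1 / (z - w) + poly (pderiv P) z / poly P z"
    by (simp only:) (simp add: field_simps)
  with add show ?case by (simp add: P_def)
qed simp

lemma Re_sum_mset_inverse_diff_pos:
  fixes A :: "complex multiset"
  assumes "A \<noteq> {#}" "\<forall>x\<in>#A. Re x < Re z"
  shows "Re (\<Sum>x\<in>#A. 1 / (z - x)) > 0"
  using assms
proof (induction A)
  case (add w A)
  have "Re (z - w) > 0" using add.prems by simp
  moreover have "z - w \<noteq> 0" using add.prems by auto
  ultimately have "Re (1 / (z - w)) > 0" by (simp add: Re_divide')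
  moreover have "Re (\<Sum>x\<in>#A. 1 / (z - x)) \<ge> 0" using add by (cases "A = {#}") auto
  ultimately show ?case by simp
qed simp

text \<open>Gauss-Lucas: p'/p = (SUM x. 1/(z - x)) over the roots x of p, and each summand has positive
  real part when z lies to the right of every root.\<close>

lemma Re_root_pderiv_less:
  fixes p :: "complex poly"
  assumes "degree p > 0" "\<And>x. poly p x = 0 \<Longrightarrow> Re x < a" "poly (pderiv p) z = 0"
  shows "Re z < a"
proof (rule ccontr)
  assume "\<not> Re z < a"
  have "p \<noteq> 0" using assms(1) by auto
  then obtain A where A: "size A = degree p" "p = smult (lead_coeff p) (\<Prod>x\<in>#A. [:-x, 1:])"
    using alg_closed_imp_factorization by blast
  define P where "P = (\<Prod>x\<in>#A. [:-x, 1:])"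
  have roots: "\<forall>x\<in>#A. Re x < Re z"
  proof
    fix x assume "x \<in># A"
    then have "poly p x = 0" by (subst A(2)) (auto simp: poly_prod_mset)
    with assms(2) \<open>\<not> Re z < a\<close> show "Re x < Re z" by force
  qed
  then have "z \<notin># A" by auto
  have "poly (pderiv P) z = 0"
    using assms(3) \<open>p \<noteq> 0\<close> by (subst (asm) A(2)) (simp add: pderiv_smult P_def)
  then have "(\<Sum>x\<in>#A. 1 / (z - x)) = 0"
    using poly_pderiv_prod_linear_div[OF \<open>z \<notin># A\<close>] by (simp add: P_def)
  moreover have "A \<noteq> {#}" using A(1) assms(1) by auto
  ultimately show False using Re_sum_mset_inverse_diff_pos[OF _ roots] by simp
qed

lemma Re_root_higher_pderiv_less:
  fixes p :: "complex poly"
  assumes "j < degree p" "\<And>x. poly p x = 0 \<Longrightarrow> Re x < a" "poly ((pderiv ^^ j) p) z = 0"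
  shows "Re z < a"
  using assms(1,3)
proof (induction j arbitrary: z)
  case 0
  then show ?case using assms(2) by simp
next
  case (Suc j)
  show ?case
  proof (rule Re_root_pderiv_less)
    show "degree ((pderiv ^^ j) p) > 0" using Suc.prems(1) by (simp add: degree_higher_pderiv)
    show "poly (pderiv ((pderiv ^^ j) p)) z = 0" using Suc.prems(2) by simp
  qed (use Suc.IH Suc.prems(1) in simp)
qed

lemma degree_pos_if_monic_root:
  fixes p :: "'a::comm_semiring_1 poly"
  assumes "lead_coeff p = 1" "poly p z = 0"
  shows "degree p > 0"
proof (rule ccontr)
  assume "\<not> degree p > 0"
  then have "p = [:1:]" using assms(1) by (metis degree_0_id gr0I)
  then show False using assms(2) by simp
qed

lemma norm_root_monic_le:
  fixes p :: "'a::real_normed_field poly"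
  assumes "lead_coeff p = 1" "poly p z = 0"
  shows "norm z \<le> 1 + (\<Sum>i<degree p. norm (coeff p i))"
proof (cases "norm z \<le> 1")
  case True
  have "0 \<le> (\<Sum>i<degree p. norm (coeff p i))" by (simp add: sum_nonneg)
  with True show ?thesis by linarith
next
  case False
  define n where "n = degree p"
  have "n > 0" using degree_pos_if_monic_root [OF assms] by (simp add: n_def)
  have "0 = (\<Sum>i<n. coeff p i * z ^ i) + z ^ n"
    using assms by (simp add: poly_altdef n_def lessThan_Suc_atMost [symmetric])
  then have "norm z ^ n = norm (\<Sum>i<n. coeff p i * z ^ i)"
    by (metis add.commute add_eq_0_iff norm_minus_cancel norm_power)
  also have "\<dots> \<le> (\<Sum>i<n. norm (coeff p i) * norm z ^ (n - 1))"
    using False by (intro order.trans [OF norm_sum] sum_mono)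
      (auto simp: norm_mult norm_power intro!: mult_left_mono power_increasing)
  finally have "norm z * norm z ^ (n - 1) \<le> (\<Sum>i<n. norm (coeff p i)) * norm z ^ (n - 1)"
    using \<open>n > 0\<close> by (simp add: sum_distrib_right power_eq_if)
  moreover have "norm z ^ (n - 1) > 0" using False by (intro zero_less_power) linarith
  ultimately have "norm z \<le> (\<Sum>i<n. norm (coeff p i))" by simp
  then show ?thesis by (simp add: n_def)
qed

lemma norm_root_le_root_radius:
  assumes "s \<noteq> 0" "poly s z = 0"
  shows "norm z \<le> root_radius s"
  unfolding root_radius_def
  using poly_roots_finite [OF assms(1)] assms(2) by (auto intro: Max_ge)

lemma root_radius_le:
  assumes "degree s > 0" "\<And>z. poly s z = 0 \<Longrightarrow> norm z \<le> B"
  shows "root_radius s \<le> B"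
proof -
  have "s \<noteq> 0" using assms(1) by auto
  obtain z where "poly s z = 0" using alg_closed_imp_poly_has_root assms(1) by blast
  then show ?thesis
    unfolding root_radius_def using poly_roots_finite [OF \<open>s \<noteq> 0\<close>] assms(2)
    by (subst Max_le_iff) auto
qed

lemma linear_factor_perturbation_has_root:
  fixes g e :: "real poly"
  assumes "\<delta> > 0" "D \<noteq> 0"
    and g: "\<And>x. \<bar>x - a\<bar> = \<delta> \<Longrightarrow> \<bar>poly g x - D\<bar> \<le> \<bar>D\<bar> / 2"
    and e: "\<And>x. \<bar>x - a\<bar> = \<delta> \<Longrightarrow> \<bar>poly e x\<bar> \<le> \<delta> * \<bar>D\<bar> / 2"
  shows "\<exists>x. \<bar>x - a\<bar> \<le> \<delta> \<and> poly ([:-a, 1:] * g - e) x = 0"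
proof -
  define f where "f = (\<lambda>x. D * poly ([:-a, 1:] * g - e) x)"
  have bounds: "\<delta> * D\<^sup>2 / 2 \<le> \<delta> * (D * poly g x)" "\<bar>D * poly e x\<bar> \<le> \<delta> * D\<^sup>2 / 2"
    if "\<bar>x - a\<bar> = \<delta>" for x
  proof -
    have "\<bar>D\<bar> * \<bar>poly g x - D\<bar> \<le> \<bar>D\<bar> * (\<bar>D\<bar> / 2)" using g [OF that] by (rule mult_left_mono) simp
    then have "- (D * (poly g x - D)) \<le> D\<^sup>2 / 2"
      by (intro abs_le_D2) (simp add: abs_mult power2_eq_square)
    then have "D\<^sup>2 / 2 \<le> D * poly g x" unfolding power2_eq_square right_diff_distrib by linarith
    then show "\<delta> * D\<^sup>2 / 2 \<le> \<delta> * (D * poly g x)" using assms(1) by (simp add: mult_left_mono)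
    have "\<bar>D\<bar> * \<bar>poly e x\<bar> \<le> \<bar>D\<bar> * (\<delta> * \<bar>D\<bar> / 2)" using e [OF that] by (rule mult_left_mono) simp
    also have "\<dots> = \<delta> * (\<bar>D\<bar> * \<bar>D\<bar>) / 2" by simp
    finally show "\<bar>D * poly e x\<bar> \<le> \<delta> * D\<^sup>2 / 2"
      by (simp only: abs_mult abs_mult_self_eq power2_eq_square)
  qed
  have "\<bar>(a - \<delta>) - a\<bar> = \<delta>" "\<bar>(a + \<delta>) - a\<bar> = \<delta>" using assms(1) by simp_all
  note left = bounds [OF this(1)] and right = bounds [OF this(2)]
  have "f (a - \<delta>) = - (\<delta> * (D * poly g (a - \<delta>))) - D * poly e (a - \<delta>)"
    "f (a + \<delta>) = \<delta> * (D * poly g (a + \<delta>)) - D * poly e (a + \<delta>)"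
    by (simp_all add: f_def algebra_simps)
  then have "f (a - \<delta>) \<le> 0" "0 \<le> f (a + \<delta>)"
    using left right abs_ge_minus_self [of "D * poly e (a - \<delta>)"] abs_ge_self [of "D * poly e (a + \<delta>)"]
    by linarith+
  moreover have "\<forall>x. isCont f x" unfolding f_def by (intro allI continuous_intros)
  ultimately obtain x where "a - \<delta> \<le> x" "x \<le> a + \<delta>" "f x = 0"
    using IVT [of f "a - \<delta>" 0 "a + \<delta>"] assms(1) by auto
  then show ?thesis using assms(2) unfolding f_def by (intro exI [of _ x]) auto
qed

lemma simple_root_perturbation:
  fixes h s :: "real poly"
  assumes "h \<noteq> 0" "order a h = 1"
  obtains C \<mu>0 where "C > 0" "\<mu>0 > 0"
    "\<And>\<mu>. 0 < \<mu> \<Longrightarrow> \<mu> < \<mu>0 \<Longrightarrow> \<exists>x. \<bar>x - a\<bar> \<le> C * \<mu> \<and> poly (h - smult \<mu> s) x = 0"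
proof -
  obtain g where g: "h = [:-a, 1:] * g" "\<not> [:-a, 1:] dvd g"
    using order_decomp [OF assms(1), of a] assms(2) by auto
  define D where "D = poly g a"
  have "D \<noteq> 0" using g(2) by (simp add: D_def poly_eq_0_iff_dvd)
  have "poly g \<midarrow>a\<rightarrow> D" unfolding D_def isCont_def [symmetric] by simp
  then obtain \<eta> where \<eta>: "\<eta> > 0" "\<And>x. x \<noteq> a \<Longrightarrow> \<bar>x - a\<bar> < \<eta> \<Longrightarrow> \<bar>poly g x - D\<bar> < \<bar>D\<bar> / 2"
    using LIM_D [of "poly g" D a "\<bar>D\<bar> / 2"] \<open>D \<noteq> 0\<close> by auto
  obtain S where S: "S > 0" "\<And>x. \<bar>x\<bar> \<le> \<bar>a\<bar> + 1 \<Longrightarrow> \<bar>poly s x\<bar> \<le> S"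
    using poly_bound_exists [of "\<bar>a\<bar> + 1" s] by auto
  define C where "C = 2 * S / \<bar>D\<bar>"
  have "C > 0" using S(1) \<open>D \<noteq> 0\<close> by (simp add: C_def)
  show ?thesis
  proof (rule that [of C "min \<eta> 1 / C"])
    show "C > 0" by fact
    show "min \<eta> 1 / C > 0" using \<open>C > 0\<close> \<eta>(1) by simp
    fix \<mu> :: real assume \<mu>: "0 < \<mu>" "\<mu> < min \<eta> 1 / C"
    then have "C * \<mu> < \<eta>" "C * \<mu> < 1"
      using \<open>C > 0\<close> by (simp_all add: pos_less_divide_eq mult.commute)
    have "\<exists>x. \<bar>x - a\<bar> \<le> C * \<mu> \<and> poly ([:-a, 1:] * g - smult \<mu> s) x = 0"
    proof (rule linear_factor_perturbation_has_root)
      show "C * \<mu> > 0" using \<open>C > 0\<close> \<mu>(1) by simp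
      show "\<bar>poly g x - D\<bar> \<le> \<bar>D\<bar> / 2" if "\<bar>x - a\<bar> = C * \<mu>" for x
        using \<eta>(2) [of x] that \<open>C * \<mu> < \<eta>\<close> \<open>C * \<mu> > 0\<close> by fastforce
      show "\<bar>poly (smult \<mu> s) x\<bar> \<le> C * \<mu> * \<bar>D\<bar> / 2" if "\<bar>x - a\<bar> = C * \<mu>" for x
      proof -
        have "\<bar>poly s x\<bar> \<le> S" using S(2) that \<open>C * \<mu> < 1\<close> by auto
        have "\<bar>poly (smult \<mu> s) x\<bar> = \<mu> * \<bar>poly s x\<bar>" using \<mu>(1) by (simp add: abs_mult)
        also have "\<dots> \<le> \<mu> * S" using \<open>\<bar>poly s x\<bar> \<le> S\<close> \<mu>(1) by (simp add: mult_left_mono)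
        also have "\<dots> = C * \<mu> * \<bar>D\<bar> / 2" using \<open>D \<noteq> 0\<close> by (simp add: C_def)
        finally show ?thesis .
      qed
    qed fact
    then show "\<exists>x. \<bar>x - a\<bar> \<le> C * \<mu> \<and> poly (h - smult \<mu> s) x = 0" by (simp add: g(1))
  qed
qed

lemma Re_root_higher_pderiv_le_root_radius:
  fixes p :: "complex poly"
  assumes "j < degree p" "poly ((pderiv ^^ j) p) w = 0"
  shows "Re w \<le> root_radius p"
proof -
  obtain z where z: "poly p z = 0" "Re w \<le> Re z"
    using Re_root_higher_pderiv_less [OF assms(1) _ assms(2), of "Re w"] by force
  have "p \<noteq> 0" using assms(1) by auto
  have "Re z \<le> norm z" by (rule complex_Re_le_cmod)
  also have "\<dots> \<le> root_radius p" using \<open>p \<noteq> 0\<close> z(1) by (rule norm_root_le_root_radius)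
  finally show ?thesis using z(2) by linarith
qed

lemma
  fixes q r :: "real poly"
  assumes "lead_coeff q = 1" "degree r < degree q"
  shows degree_complex_pencil: "degree (map_poly complex_of_real (q - smult c r)) = degree q"
    and lead_coeff_complex_pencil: "lead_coeff (map_poly complex_of_real (q - smult c r)) = 1"
proof -
  have "degree (- smult c r) < degree q" using assms(2) by simp
  then have "degree (q - smult c r) = degree q" "lead_coeff (q - smult c r) = 1"
    using degree_add_eq_left [of "- smult c r" q] lead_coeff_add_le [of "- smult c r" q] assms(1)
    by (simp_all add: add.commute)
  then show "degree (map_poly complex_of_real (q - smult c r)) = degree q"
    "lead_coeff (map_poly complex_of_real (q - smult c r)) = 1"
    using lead_coeff_map_poly_nz [of complex_of_real "q - smult c r"] by (simp_all add: degree_map_poly)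
qed

lemma bdd_above_root_radius_pencil:
  fixes q r :: "real poly"
  assumes "lead_coeff q = 1" "degree r < degree q" "\<And>c. c \<in> N \<Longrightarrow> \<bar>c\<bar> \<le> L"
  shows "bdd_above ((\<lambda>c. root_radius (map_poly complex_of_real (q - smult c r))) ` N)"
proof (rule bdd_aboveI2)
  fix c assume "c \<in> N"
  define P where "P = map_poly complex_of_real (q - smult c r)"
  have P: "degree P = degree q" "lead_coeff P = 1"
    unfolding P_def using assms(1,2) by (rule degree_complex_pencil lead_coeff_complex_pencil)+
  show "root_radius P \<le> 1 + (\<Sum>i<degree q. \<bar>coeff q i\<bar> + L * \<bar>coeff r i\<bar>)"
  proof (rule root_radius_le)
    show "degree P > 0" using P(1) assms(2) by simp
    fix z assume "poly P z = 0"
    then have "norm z \<le> 1 + (\<Sum>i<degree q. norm (coeff P i))"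
      using norm_root_monic_le [OF P(2)] P(1) by simp
    also have "\<dots> \<le> 1 + (\<Sum>i<degree q. \<bar>coeff q i\<bar> + L * \<bar>coeff r i\<bar>)"
    proof (intro add_left_mono sum_mono)
      fix i
      have "norm (coeff P i) = \<bar>coeff q i - c * coeff r i\<bar>"
        by (simp add: P_def coeff_map_poly flip: of_real_mult of_real_diff)
      also have "\<dots> \<le> \<bar>coeff q i\<bar> + \<bar>c * coeff r i\<bar>" by (rule abs_triangle_ineq4)
      also have "\<bar>c * coeff r i\<bar> \<le> L * \<bar>coeff r i\<bar>"
        using assms(3) [OF \<open>c \<in> N\<close>] by (simp add: abs_mult mult_right_mono)
      finally show "norm (coeff P i) \<le> \<bar>coeff q i\<bar> + L * \<bar>coeff r i\<bar>" by simp
    qed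
    finally show "norm z \<le> 1 + (\<Sum>i<degree q. \<bar>coeff q i\<bar> + L * \<bar>coeff r i\<bar>)" .
  qed
qed

lemma root_radius_pencil_ge:
  fixes q r :: "real poly"
  assumes "lead_coeff q = 1" "poly q 1 = 0" "degree r < degree q"
  obtains C \<mu>0 where "C > 0" "\<mu>0 > 0"
    "\<And>\<mu>. 0 < \<mu> \<Longrightarrow> \<mu> < \<mu>0 \<Longrightarrow> 1 - C * \<mu> \<le> root_radius (map_poly complex_of_real (q - smult \<mu> r))"
proof -
  have "q \<noteq> 0" using assms(1) by auto
  define k where "k = order 1 q"
  have "k \<noteq> 0" "k \<le> degree q"
    using order_root [of q 1] order_degree [OF \<open>q \<noteq> 0\<close>] assms(2) \<open>q \<noteq> 0\<close> by (auto simp: k_def)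
  define h where "h = (pderiv ^^ (k - 1)) q"
  have "h \<noteq> 0" "order 1 h = 1"
    using order_higher_pderiv [OF \<open>q \<noteq> 0\<close>, of "k - 1" 1] \<open>k \<noteq> 0\<close> by (simp_all add: h_def k_def)
  obtain C \<mu>0 where C: "C > 0" "\<mu>0 > 0"
    and roots: "\<And>\<mu>. 0 < \<mu> \<Longrightarrow> \<mu> < \<mu>0 \<Longrightarrow>
      \<exists>x. \<bar>x - 1\<bar> \<le> C * \<mu> \<and> poly (h - smult \<mu> ((pderiv ^^ (k - 1)) r)) x = 0"
    using simple_root_perturbation [OF \<open>h \<noteq> 0\<close> \<open>order 1 h = 1\<close>] by blast
  show ?thesis
  proof (rule that [OF C])
    fix \<mu> :: real assume "0 < \<mu>" "\<mu> < \<mu>0"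
    then obtain x where x: "\<bar>x - 1\<bar> \<le> C * \<mu>" "poly (h - smult \<mu> ((pderiv ^^ (k - 1)) r)) x = 0"
      using roots by blast
    define G where "G = map_poly complex_of_real (q - smult \<mu> r)"
    have "poly ((pderiv ^^ (k - 1)) G) (complex_of_real x) = 0"
      using x(2) by (simp add: G_def h_def higher_pderiv_map_poly_of_real higher_pderiv_diff
          higher_pderiv_smult poly_map_poly_of_real)
    moreover have "k - 1 < degree G"
      using \<open>k \<noteq> 0\<close> \<open>k \<le> degree q\<close> degree_complex_pencil [OF assms(1,3)] by (simp add: G_def)
    ultimately have "x \<le> root_radius G"
      using Re_root_higher_pderiv_le_root_radius by fastforce
    then show "1 - C * \<mu> \<le> root_radius (map_poly complex_of_real (q - smult \<mu> r))"
      using x(1) by (simp add: G_def)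
  qed
qed

theorem proposition8:
  fixes q r :: "real poly" and p :: nat and l :: real
  assumes "lead_coeff q = 1" and "degree q = p" and "poly q 1 = 0"
    and "degree r = p - 1" and "r \<noteq> 0" and "l > 0"
  shows "\<exists>C0 > 0. \<exists>\<mu>0. 0 < \<mu>0 \<and> \<mu>0 < l \<and>
           (\<forall>\<mu>. 0 < \<mu> \<and> \<mu> < \<mu>0 \<longrightarrow>
              (SUP \<nu>\<in>{\<mu>..l}. root_radius (map_poly complex_of_real (q - smult \<nu> r)))
                \<ge> 1 - C0 * \<mu> / l)"
proof -
  have "degree r < degree q" using degree_pos_if_monic_root [OF assms(1,3)] assms(2,4) by simp
  then obtain C \<mu>1 where C: "C > 0" "\<mu>1 > 0"
    and bound: "\<And>\<mu>. 0 < \<mu> \<Longrightarrow> \<mu> < \<mu>1 \<Longrightarrow>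
      1 - C * \<mu> \<le> root_radius (map_poly complex_of_real (q - smult \<mu> r))"
    using root_radius_pencil_ge [OF assms(1,3)] by blast
  show ?thesis
  proof (intro exI conjI allI impI)
    show "C * l > 0" "min (l / 2) \<mu>1 > 0" "min (l / 2) \<mu>1 < l" using C assms(6) by auto
    fix \<mu> :: real assume \<mu>: "0 < \<mu> \<and> \<mu> < min (l / 2) \<mu>1"
    have "1 - C * l * \<mu> / l = 1 - C * \<mu>" using assms(6) by simp
    also have "\<dots> \<le> root_radius (map_poly complex_of_real (q - smult \<mu> r))" using \<mu> by (intro bound) auto
    also have "\<dots> \<le> (SUP \<nu>\<in>{\<mu>..l}. root_radius (map_poly complex_of_real (q - smult \<nu> r)))"
      using \<mu> assms(6) bdd_above_root_radius_pencil [OF assms(1) \<open>degree r < degree q\<close>, of "{\<mu>..l}" l]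
      by (intro cSUP_upper) auto
    finally show "1 - C * l * \<mu> / l \<le>
        (SUP \<nu>\<in>{\<mu>..l}. root_radius (map_poly complex_of_real (q - smult \<nu> r)))" .
  qed
qed

end
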